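(* Let $\mathcal H$ be a separable Hilbert space, $(X,\mathcal M,\mu)$ a $\sigma$-finite measure space, and $\{\phi_t\}_{t\in X}$ a continuous Bessel family over $X$ in $\mathcal H$. Let $\mathcal M'\subset\mathcal M$ be the $\sigma$-algebra generated by the sets $\{t\in X:\phi_t\in U\}$, where $U$ ranges over open subsets of $\mathcal H$. Then the measure algebra associated with $(X,\mathcal M',\mu)$ is separable.
   Context: A family $\{\phi_t\}_{t\in X}$ of vectors in $\mathcal H$ is a continuous Bessel family (with bound $B$) over the measure space $(X,\mu)$ if (i) for each $f\in\mathcal H$ the function $t\mapsto\langle f,\phi_t\rangle$ is measurable, and (ii) there is $B<\infty$ with $\int_X|\langle f,\phi_t\rangle|^2\,d\mu(t)\le B\|f\|^2$ for all $f\in\mathcal H$. The measure algebra of a measure space $(X,\mathcal N,\mu)$ consists of equivalence classes of sets in $\mathcal N$ under $E\sim F\iff\mu(E\triangle F)=0$; it is called separable if the set of (classes of) sets of finite measure with the metric $\rho(E,F)=\mu(E\triangle F)$ is a separable metric space. *)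

theory Defs
  imports "HOL-Analysis.Analysis"
begin

definition continuous_bessel_family :: "'b measure \<Rightarrow> ('b \<Rightarrow> 'a::real_inner) \<Rightarrow> bool" where
  "continuous_bessel_family M \<phi> \<longleftrightarrow>
     (\<forall>f. (\<lambda>t. inner f (\<phi> t)) \<in> borel_measurable M) \<and>
     (\<exists>B::real. \<forall>f. (\<integral>\<^sup>+ t. ennreal ((inner f (\<phi> t))\<^sup>2) \<partial>M) \<le> ennreal (B * (norm f)\<^sup>2))"

text \<open>Separability of the measure algebra of (space M, A, emeasure M restricted to A):
  the sets of A of finite measure, with pseudometric mu(E symdiff F), form a separable space.
  (Passing to the quotient by null sets does not affect separability.)\<close>
definition separable_measure_algebra :: "'b measure \<Rightarrow> 'b set set \<Rightarrow> bool" where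
  "separable_measure_algebra M A \<longleftrightarrow>
     (\<exists>D. countable D \<and> D \<subseteq> {E \<in> A. emeasure M E < \<infinity>} \<and>
        (\<forall>E \<in> A. emeasure M E < \<infinity> \<longrightarrow>
           (\<forall>e::real. e > 0 \<longrightarrow> (\<exists>F \<in> D. emeasure M ((E - F) \<union> (F - E)) < ennreal e))))"

end

theory Submission
  imports Defs
begin

text \<open>Fix a countable dense set \<open>D\<close>. Every open set is a countable union of closed balls with
  centres in \<open>D\<close> and rational radii, and the \<open>\<phi>\<close>-preimage of such a ball is cut out by the countably
  many weakly measurable conditions \<open>\<langle>f, d - \<phi> t\<rangle> \<le> r \<parallel>f\<parallel>\<close>, \<open>f \<in> D\<close>. So the \<sigma>-algebra generated by \<open>\<phi>\<close>
  consists of measurable sets and is generated by a countable algebra, which approximates each of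
  its sets in measure inside any set of finite measure. The Bessel bound gives the level sets
  \<open>{t. 1/k \<le> \<langle>d, \<phi> t\<rangle>\<^sup>2}\<close> finite measure; together with \<open>{t. \<phi> t = 0}\<close> (when it has finite measure)
  they exhaust every set of finite measure of the \<sigma>-algebra, so the traces of the countable
  algebra on finite unions of them form a countable dense family.\<close>

lemma open_eq_Union_rational_cballs:
  fixes U :: "'a::metric_space set"
  assumes dense: "closure D = UNIV" and "open U"
  shows "U = (\<Union>(d, q) \<in> {(d, q). d \<in> D \<and> 0 < q \<and> cball d (real_of_rat q) \<subseteq> U}. cball d (real_of_rat q))"
proof (intro equalityI subsetI)
  fix x assume "x \<in> U"
  then obtain e where "e > 0" and e: "ball x e \<subseteq> U"
    using \<open>open U\<close> open_contains_ball by blast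
  then obtain d where "d \<in> D" and d: "dist d x < e / 3"
    using dense closure_approachable[of x D] by (metis UNIV_I zero_less_divide_iff zero_less_numeral)
  obtain q where q: "e / 3 < real_of_rat q" "real_of_rat q < 2 * e / 3"
    using of_rat_dense[of "e / 3" "2 * e / 3"] \<open>e > 0\<close> by auto
  have "cball d (real_of_rat q) \<subseteq> ball x e"
  proof
    fix y assume "y \<in> cball d (real_of_rat q)"
    moreover have "dist x y \<le> dist x d + dist d y"
      by (rule dist_triangle)
    ultimately show "y \<in> ball x e"
      using d q(2) by (simp add: dist_commute)
  qed
  moreover have "0 < real_of_rat q" "dist d x \<le> real_of_rat q"
    using d q(1) \<open>e > 0\<close> by linarith+
  ultimately show "x \<in> (\<Union>(d, q) \<in> {(d, q). d \<in> D \<and> 0 < q \<and> cball d (real_of_rat q) \<subseteq> U}. cball d (real_of_rat q))"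
    using \<open>d \<in> D\<close> e by force
qed auto

lemma norm_le_iff_inner_le_dense:
  fixes y :: "'a::real_inner"
  assumes dense: "closure D = UNIV" and "r \<ge> 0"
  shows "norm y \<le> r \<longleftrightarrow> (\<forall>f\<in>D. inner f y \<le> r * norm f)"
proof
  assume "norm y \<le> r"
  then show "\<forall>f\<in>D. inner f y \<le> r * norm f"
    by (metis Cauchy_Schwarz_ineq2 abs_le_D1 mult.commute mult_left_mono norm_ge_zero order_trans)
next
  assume "\<forall>f\<in>D. inner f y \<le> r * norm f"
  moreover have "closed {f. inner f y \<le> r * norm f}"
    by (intro closed_Collect_le continuous_intros)
  ultimately have "closure D \<subseteq> {f. inner f y \<le> r * norm f}"
    by (intro closure_minimal) auto
  then have "inner y y \<le> r * norm y"
    using dense by auto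
  then have "norm y * norm y \<le> r * norm y"
    by (simp add: dot_square_norm power2_eq_square)
  then show "norm y \<le> r"
    using \<open>r \<ge> 0\<close> by (cases "norm y = 0") (auto simp: mult_le_cancel_right)
qed

lemma inner_dense_nonzero:
  fixes y :: "'a::real_inner"
  assumes "closure D = UNIV" and "y \<noteq> 0"
  obtains f where "f \<in> D" and "inner f y \<noteq> 0"
  using norm_le_iff_inner_le_dense[OF assms(1) order_refl, of y] assms(2) by force

lemma weakly_measurable_vimage_cball:
  fixes \<phi> :: "'b \<Rightarrow> 'a::real_inner" and D :: "'a set"
  assumes "countable D" "closure D = UNIV" "r \<ge> 0"
    and weak: "\<And>f. (\<lambda>t. inner f (\<phi> t)) \<in> borel_measurable M"
  shows "{t \<in> space M. \<phi> t \<in> cball d r} \<in> sets M"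
proof -
  have "{t \<in> space M. \<phi> t \<in> cball d r} = {t \<in> space M. \<forall>f\<in>D. inner f d - inner f (\<phi> t) \<le> r * norm f}"
    using norm_le_iff_inner_le_dense[OF assms(2,3)] by (auto simp: dist_norm inner_diff_right)
  moreover have "{t \<in> space M. inner f d - inner f (\<phi> t) \<le> r * norm f} \<in> sets M" for f
    using weak[of f] by measurable
  ultimately show ?thesis
    using \<open>countable D\<close> by (simp add: sets.sets_Collect_countable_All')
qed

lemma vimage_closed_in_sigma_sets_vimage_open:
  assumes "closed C"
  shows "{t \<in> \<Omega>. \<phi> t \<in> C} \<in> sigma_sets \<Omega> {{t \<in> \<Omega>. \<phi> t \<in> U} | U. open U}"
proof -
  have "\<Omega> - {t \<in> \<Omega>. \<phi> t \<in> - C} \<in> sigma_sets \<Omega> {{t \<in> \<Omega>. \<phi> t \<in> U} | U. open U}"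
    using assms by (intro sigma_sets.Compl sigma_sets.Basic) auto
  moreover have "\<Omega> - {t \<in> \<Omega>. \<phi> t \<in> - C} = {t \<in> \<Omega>. \<phi> t \<in> C}"
    by auto
  ultimately show ?thesis
    by simp
qed

lemma sigma_sets_vimage_open_eq_rational_cballs:
  fixes \<phi> :: "'b \<Rightarrow> 'a::metric_space" and D :: "'a set"
  assumes "countable D" "closure D = UNIV"
  shows "sigma_sets \<Omega> {{t \<in> \<Omega>. \<phi> t \<in> U} | U. open U}
       = sigma_sets \<Omega> ((\<lambda>(d, q). {t \<in> \<Omega>. \<phi> t \<in> cball d (real_of_rat q)}) ` (D \<times> {q. 0 < q}))"
    (is "sigma_sets \<Omega> ?G = sigma_sets \<Omega> ?B")
proof
  show "sigma_sets \<Omega> ?B \<subseteq> sigma_sets \<Omega> ?G"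
    by (intro sigma_sets_mono image_subsetI)
      (simp add: case_prod_beta vimage_closed_in_sigma_sets_vimage_open del: mem_cball)
  show "sigma_sets \<Omega> ?G \<subseteq> sigma_sets \<Omega> ?B"
  proof (intro sigma_sets_mono subsetI)
    fix X assume "X \<in> ?G"
    then obtain U where "open U" and X: "X = {t \<in> \<Omega>. \<phi> t \<in> U}"
      by blast
    define K where "K = {(d, q). d \<in> D \<and> 0 < q \<and> cball d (real_of_rat q) \<subseteq> U}"
    have "countable K"
      unfolding K_def by (rule countable_subset[of _ "D \<times> UNIV"]) (use assms(1) in auto)
    moreover have "X = (\<Union>(d, q)\<in>K. {t \<in> \<Omega>. \<phi> t \<in> cball d (real_of_rat q)})"
      unfolding X by (subst open_eq_Union_rational_cballs[OF assms(2) \<open>open U\<close>]) (auto simp: K_def; blast)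
    moreover have "{t \<in> \<Omega>. \<phi> t \<in> cball d (real_of_rat q)} \<in> sigma_sets \<Omega> ?B" if "(d, q) \<in> K" for d q
      using that by (intro sigma_sets.Basic rev_image_eqI[of "(d, q)"]) (auto simp: K_def)
    ultimately show "X \<in> sigma_sets \<Omega> ?B"
      by (auto intro!: sigma_sets_UNION)
  qed
qed

lemma weakly_measurable_sigma_sets_vimage_open:
  fixes \<phi> :: "'b \<Rightarrow> 'a::real_inner" and D :: "'a set"
  assumes D: "countable D" "closure D = UNIV"
    and weak: "\<And>f. (\<lambda>t. inner f (\<phi> t)) \<in> borel_measurable M"
  shows "sigma_sets (space M) {{t \<in> space M. \<phi> t \<in> U} | U. open U} \<subseteq> sets M"
  unfolding sigma_sets_vimage_open_eq_rational_cballs[OF D]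
  using weakly_measurable_vimage_cball[OF D _ weak] by (intro sets.sigma_sets_subset) auto

text \<open>The algebra generated by a countable family is countable: it consists of the values of
  countably many set expressions over an enumeration of the family.\<close>
datatype set_expr = Gen nat | Emp | Cpl set_expr | Uni set_expr set_expr

instance set_expr :: countable
  by countable_datatype

primrec eval_set_expr :: "'a set \<Rightarrow> (nat \<Rightarrow> 'a set) \<Rightarrow> set_expr \<Rightarrow> 'a set" where
  "eval_set_expr \<Omega> g (Gen n) = g n"
| "eval_set_expr \<Omega> g Emp = {}"
| "eval_set_expr \<Omega> g (Cpl x) = \<Omega> - eval_set_expr \<Omega> g x"
| "eval_set_expr \<Omega> g (Uni x y) = eval_set_expr \<Omega> g x \<union> eval_set_expr \<Omega> g y"

lemma countable_generated_algebra:
  assumes "countable G" "G \<subseteq> Pow \<Omega>"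
  obtains A where "countable A" "algebra \<Omega> A" "G \<subseteq> A" "sigma_sets \<Omega> A = sigma_sets \<Omega> G"
proof -
  \<comment> \<open>\<open>from_nat_into {}\<close> is unspecified, hence the enumeration of \<open>insert {} G\<close>.\<close>
  define g where "g = from_nat_into (insert {} G)"
  define A where "A = range (eval_set_expr \<Omega> g)"
  have "g n \<in> sigma_sets \<Omega> G" for n
    using from_nat_into[of "insert {} G" n] by (auto simp: g_def intro: sigma_sets.intros)
  then have "eval_set_expr \<Omega> g x \<in> sigma_sets \<Omega> G" for x
    by (induction x) (auto intro: sigma_sets.intros sigma_sets_Un)
  then have A_sigma: "A \<subseteq> sigma_sets \<Omega> G"
    by (auto simp: A_def)
  have "countable A"
    by (simp add: A_def)
  moreover have "G \<subseteq> A"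
  proof
    fix X assume "X \<in> G"
    then obtain n where "X = g n"
      using from_nat_into_surj[of "insert {} G" X] assms(1) by (auto simp: g_def)
    then show "X \<in> A"
      using rangeI[of "eval_set_expr \<Omega> g" "Gen n"] by (simp add: A_def)
  qed
  moreover have "algebra \<Omega> A"
    unfolding algebra_iff_Un
  proof (intro conjI ballI)
    show "A \<subseteq> Pow \<Omega>"
      using A_sigma sigma_sets_into_sp[OF assms(2)] by blast
    show "{} \<in> A"
      using rangeI[of "eval_set_expr \<Omega> g" Emp] by (simp add: A_def)
    show "\<Omega> - a \<in> A" if "a \<in> A" for a
    proof -
      obtain x where "a = eval_set_expr \<Omega> g x"
        using \<open>a \<in> A\<close> by (auto simp: A_def)
      then show ?thesis
        using rangeI[of "eval_set_expr \<Omega> g" "Cpl x"] by (simp add: A_def)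
    qed
    show "a \<union> b \<in> A" if ab: "a \<in> A" "b \<in> A" for a b
    proof -
      obtain x y where "a = eval_set_expr \<Omega> g x" "b = eval_set_expr \<Omega> g y"
        using ab unfolding A_def by blast
      then show ?thesis
        using rangeI[of "eval_set_expr \<Omega> g" "Uni x y"] by (simp add: A_def)
    qed
  qed
  moreover have "sigma_sets \<Omega> A = sigma_sets \<Omega> G"
    using sigma_sets_mono[OF A_sigma] sigma_sets_mono'[OF \<open>G \<subseteq> A\<close>] by (rule equalityI)
  ultimately show thesis
    using that by blast
qed

lemma sigma_sets_vimage_open_generated_by_countable_algebra:
  fixes \<phi> :: "'b \<Rightarrow> 'a::metric_space" and D :: "'a set"
  assumes "countable D" "closure D = UNIV"
  obtains Alg where "countable Alg" "algebra \<Omega> Alg"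
    "sigma_sets \<Omega> Alg = sigma_sets \<Omega> {{t \<in> \<Omega>. \<phi> t \<in> U} | U. open U}"
proof -
  define G where "G = (\<lambda>(d, q). {t \<in> \<Omega>. \<phi> t \<in> cball d (real_of_rat q)}) ` (D \<times> {q. 0 < q})"
  have "countable G" "G \<subseteq> Pow \<Omega>"
    using assms(1) by (auto simp: G_def)
  then obtain Alg where "countable Alg" "algebra \<Omega> Alg" "sigma_sets \<Omega> Alg = sigma_sets \<Omega> G"
    by (rule countable_generated_algebra)
  with sigma_sets_vimage_open_eq_rational_cballs[OF assms, of \<Omega> \<phi>] show thesis
    using that by (simp add: G_def)
qed

lemma tendsto_emeasure_Diff_incseq:
  assumes "E \<in> sets M" "emeasure M E < \<infinity>"
    and "range F \<subseteq> sets M" "incseq F" "E \<subseteq> (\<Union>k. F k)"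
  shows "(\<lambda>k. emeasure M (E - F k)) \<longlonglongrightarrow> 0"
proof -
  have "(\<lambda>k. emeasure M (E - F k)) \<longlonglongrightarrow> emeasure M (\<Inter>k. E - F k)"
  proof (rule Lim_emeasure_decseq)
    show "range (\<lambda>k. E - F k) \<subseteq> sets M"
      using assms(1,3) by auto
    show "decseq (\<lambda>k. E - F k)"
      using \<open>incseq F\<close> by (auto simp: incseq_def decseq_def)
    show "emeasure M (E - F k) \<noteq> \<infinity>" for k
      using emeasure_mono[of "E - F k" E M] assms(1,2) by (auto simp: top_unique)
  qed
  moreover have "(\<Inter>k. E - F k) = {}"
    using \<open>E \<subseteq> (\<Union>k. F k)\<close> by blast
  ultimately show ?thesis
    by (metis emeasure_empty)
qed

lemma emeasure_Int_sym_diff_approx_Union: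
  fixes A :: "nat \<Rightarrow> 'a set"
  assumes Alg: "ring_of_sets (space M) Alg" "Alg \<subseteq> sets M"
    and F: "F \<in> sets M" "emeasure M F < \<infinity>"
    and A_sets: "\<And>i. A i \<in> sets M"
    and approx: "\<And>i d. d > 0 \<Longrightarrow> \<exists>H\<in>Alg. emeasure M (sym_diff (A i) H \<inter> F) < ennreal d"
    and "e > 0"
  shows "\<exists>H\<in>Alg. emeasure M (sym_diff (\<Union>i. A i) H \<inter> F) < ennreal e"
proof -
  define T where "T N = ((\<Union>i. A i) \<inter> F) - (\<Union>i<N. A i)" for N
  have "(\<lambda>N. emeasure M (T N)) \<longlonglongrightarrow> 0"
    unfolding T_def
  proof (rule tendsto_emeasure_Diff_incseq)
    show "(\<Union>i. A i) \<inter> F \<in> sets M" "range (\<lambda>N. \<Union>i<N. A i) \<subseteq> sets M"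
      using A_sets F(1) by auto
    show "emeasure M ((\<Union>i. A i) \<inter> F) < \<infinity>"
      using emeasure_mono[of "(\<Union>i. A i) \<inter> F" F M] F by auto
    show "incseq (\<lambda>N. \<Union>i<N. A i)"
      by (rule incseq_SucI) (auto simp: lessThan_Suc)
    show "(\<Union>i. A i) \<inter> F \<subseteq> (\<Union>N. \<Union>i<N. A i)"
      by blast
  qed
  then obtain N where N: "emeasure M (T N) < ennreal (e / 2)"
    using order_tendstoD(2)[of _ 0 sequentially "ennreal (e / 2)"] \<open>e > 0\<close>
    by (auto simp: eventually_sequentially)
  define d where "d = e / (4 * (real N + 1))"
  have "d > 0"
    using \<open>e > 0\<close> by (simp add: d_def)
  then obtain H where H_Alg: "\<And>i. H i \<in> Alg"
    and H: "\<And>i. emeasure M (sym_diff (A i) (H i) \<inter> F) < ennreal d"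
    using approx by metis
  have H_sets: "H i \<in> sets M" for i
    using H_Alg Alg(2) by blast
  have "sym_diff (\<Union>i. A i) (\<Union>i<N. H i) \<inter> F \<subseteq> T N \<union> (\<Union>i<N. sym_diff (A i) (H i) \<inter> F)"
    by (auto simp: T_def)
  then have "emeasure M (sym_diff (\<Union>i. A i) (\<Union>i<N. H i) \<inter> F)
      \<le> emeasure M (T N \<union> (\<Union>i<N. sym_diff (A i) (H i) \<inter> F))"
    using A_sets H_sets F(1) by (intro emeasure_mono) (auto simp: T_def)
  also have "\<dots> \<le> emeasure M (T N) + (\<Sum>i<N. emeasure M (sym_diff (A i) (H i) \<inter> F))"
    using A_sets H_sets F(1)
    by (intro order.trans[OF emeasure_subadditive] add_left_mono emeasure_subadditive_finite)
      (auto simp: T_def)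
  also have "\<dots> \<le> ennreal (e / 2) + ennreal (real N * d)"
    using N H \<open>d > 0\<close> sum_mono[of "{..<N}" "\<lambda>i. emeasure M (sym_diff (A i) (H i) \<inter> F)" "\<lambda>_. ennreal d"]
    by (intro add_mono) (auto simp: less_imp_le ennreal_of_nat_eq_real_of_nat ennreal_mult'')
  also have "\<dots> = ennreal (e / 2 + real N * d)"
    using \<open>e > 0\<close> \<open>d > 0\<close> by (simp add: ennreal_plus)
  also have "\<dots> < ennreal e"
  proof (rule ennreal_lessI)
    have "real N * d \<le> e / 4"
      using \<open>e > 0\<close> by (simp add: d_def field_simps)
    then show "e / 2 + real N * d < e"
      using \<open>e > 0\<close> by linarith
  qed (use \<open>e > 0\<close> in simp)
  finally show ?thesis
    using ring_of_sets.finite_UN[OF Alg(1), of "{..<N}" H] H_Alg by blast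
qed

lemma emeasure_Int_sym_diff_approx_algebra:
  assumes Alg: "algebra (space M) Alg" "Alg \<subseteq> sets M"
    and F: "F \<in> sets M" "emeasure M F < \<infinity>"
    and "E \<in> sigma_sets (space M) Alg" "e > 0"
  shows "\<exists>H\<in>Alg. emeasure M (sym_diff E H \<inter> F) < ennreal e"
proof -
  interpret Alg: algebra "space M" Alg
    by (rule Alg(1))
  show ?thesis
    using assms(5,6)
  proof (induction arbitrary: e)
    case (Basic a)
    then show ?case
      by (intro bexI[of _ a]) auto
  next
    case Empty
    then show ?case
      using Alg.empty_sets by (intro bexI[of _ "{}"]) auto
  next
    case (Compl a)
    obtain H where "H \<in> Alg" and H: "emeasure M (sym_diff a H \<inter> F) < ennreal e"
      using Compl.IH[OF Compl.prems] by blast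
    have "a \<subseteq> space M" "H \<subseteq> space M"
      using sigma_sets_into_sp[OF Alg.space_closed Compl.hyps]
        Alg.space_closed \<open>H \<in> Alg\<close> by auto
    then have "sym_diff (space M - a) (space M - H) = sym_diff a H"
      by blast
    then show ?case
      using H Alg.compl_sets[OF \<open>H \<in> Alg\<close>] by (intro bexI[of _ "space M - H"]) auto
  next
    case (Union A)
    have "A i \<in> sets M" for i
      using Union.hyps sets.sigma_sets_subset[OF Alg(2)] by blast
    then show ?case
      using Alg.ring_of_sets_axioms Alg(2) F Union.IH Union.prems
      by (intro emeasure_Int_sym_diff_approx_Union) auto
  qed
qed

lemma emeasure_sym_diff_approx_trace:
  assumes Alg: "algebra (space M) Alg" "Alg \<subseteq> sets M"
    and F: "incseq F" "range F \<subseteq> sets M" "\<And>k. emeasure M (F k) < \<infinity>"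
    and E: "E \<in> sigma_sets (space M) Alg" "emeasure M E < \<infinity>" "E \<subseteq> (\<Union>k. F k)"
    and "e > 0"
  obtains H k where "H \<in> Alg" "emeasure M (sym_diff E (H \<inter> F k)) < ennreal e"
proof -
  have "E \<in> sets M"
    using E(1) sets.sigma_sets_subset[OF Alg(2)] by blast
  then have "(\<lambda>k. emeasure M (E - F k)) \<longlonglongrightarrow> 0"
    using E(2) F(2,1) E(3) by (rule tendsto_emeasure_Diff_incseq)
  then obtain k where k: "emeasure M (E - F k) < ennreal (e / 3)"
    using order_tendstoD(2)[of _ 0 sequentially "ennreal (e / 3)"] \<open>e > 0\<close>
    by (auto simp: eventually_sequentially)
  have "F k \<in> sets M"
    using F(2) by auto
  obtain H where "H \<in> Alg" and H: "emeasure M (sym_diff E H \<inter> F k) < ennreal (e / 3)"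
    using emeasure_Int_sym_diff_approx_algebra[OF Alg \<open>F k \<in> sets M\<close> F(3)[of k] E(1), of "e / 3"] \<open>e > 0\<close>
    by auto
  have "H \<in> sets M"
    using \<open>H \<in> Alg\<close> Alg(2) by auto
  then have "emeasure M (sym_diff E (H \<inter> F k)) \<le> emeasure M ((sym_diff E H \<inter> F k) \<union> (E - F k))"
    using \<open>E \<in> sets M\<close> \<open>F k \<in> sets M\<close> by (intro emeasure_mono) blast+
  also have "\<dots> \<le> emeasure M (sym_diff E H \<inter> F k) + emeasure M (E - F k)"
    using \<open>H \<in> sets M\<close> \<open>E \<in> sets M\<close> \<open>F k \<in> sets M\<close> by (intro emeasure_subadditive) blast+
  also have "\<dots> \<le> ennreal (e / 3) + ennreal (e / 3)"
    using H k by (intro add_mono less_imp_le)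
  also have "\<dots> = ennreal (e / 3 + e / 3)"
    using \<open>e > 0\<close> by (intro ennreal_plus[symmetric]) auto
  also have "\<dots> < ennreal e"
    using \<open>e > 0\<close> by (intro ennreal_lessI) linarith+
  finally show thesis
    using \<open>H \<in> Alg\<close> that by blast
qed

lemma separable_measure_algebra_sigma_sets:
  assumes Alg: "countable Alg" "algebra (space M) Alg" "Alg \<subseteq> sets M"
    and F: "incseq F" "range F \<subseteq> sigma_sets (space M) Alg" "\<And>k. emeasure M (F k) < \<infinity>"
    and cover: "\<And>E. E \<in> sigma_sets (space M) Alg \<Longrightarrow> emeasure M E < \<infinity> \<Longrightarrow> E \<subseteq> (\<Union>k. F k)"
  shows "separable_measure_algebra M (sigma_sets (space M) Alg)"
proof -
  let ?A = "sigma_sets (space M) Alg"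
  interpret A: sigma_algebra "space M" ?A
    using Alg(3) sets.space_closed by (intro sigma_algebra_sigma_sets) blast
  have A_sets: "?A \<subseteq> sets M"
    using Alg(3) by (rule sets.sigma_sets_subset)
  define D where "D = (\<lambda>(H, k). H \<inter> F k) ` (Alg \<times> UNIV)"
  have "countable D"
    using Alg(1) by (simp add: D_def)
  moreover have "D \<subseteq> {E \<in> ?A. emeasure M E < \<infinity>}"
  proof
    fix X assume "X \<in> D"
    then obtain H k where "H \<in> Alg" and X: "X = H \<inter> F k"
      by (auto simp: D_def)
    then have "X \<in> ?A"
      using F(2) by auto
    moreover have "emeasure M X \<le> emeasure M (F k)"
      using \<open>X \<in> ?A\<close> A_sets F(2) X by (intro emeasure_mono) auto
    ultimately show "X \<in> {E \<in> ?A. emeasure M E < \<infinity>}"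
      using F(3)[of k] by (auto intro: le_less_trans)
  qed
  moreover have "\<exists>X\<in>D. emeasure M (sym_diff E X) < ennreal e"
    if E: "E \<in> ?A" "emeasure M E < \<infinity>" and "e > 0" for E e
  proof -
    obtain H k where "H \<in> Alg" "emeasure M (sym_diff E (H \<inter> F k)) < ennreal e"
      using emeasure_sym_diff_approx_trace[OF Alg(2,3) F(1) _ F(3) E cover[OF E] \<open>e > 0\<close>] F(2) A_sets
      by blast
    moreover have "H \<inter> F k \<in> D"
      using \<open>H \<in> Alg\<close> unfolding D_def by (intro rev_image_eqI[of "(H, k)"]) auto
    ultimately show ?thesis
      by blast
  qed
  ultimately show ?thesis
    unfolding separable_measure_algebra_def by (intro exI[of _ D] conjI ballI allI impI) auto
qed

lemma sigma_sets_vimage_open_fibre_subset: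
  assumes "E \<in> sigma_sets \<Omega> {{t \<in> \<Omega>. \<phi> t \<in> U} | U. open U}" "t \<in> E"
    and "s \<in> \<Omega>" "\<phi> s = \<phi> t"
  shows "s \<in> E"
proof -
  have "{{t \<in> \<Omega>. \<phi> t \<in> U} | U. open U} = {\<phi> -` U \<inter> \<Omega> | U. U \<in> Collect open}"
    by blast
  then have "E \<in> {\<phi> -` S \<inter> \<Omega> | S. S \<in> sigma_sets UNIV (Collect open)}"
    using assms(1) sigma_sets_vimage_commute[of \<phi> \<Omega> UNIV "Collect open"] by simp
  then show ?thesis
    using assms(2-) by blast
qed

lemma inner_enumeration_level:
  fixes y :: "'a::real_inner"
  assumes "countable D" "closure D = UNIV" and "y \<noteq> 0"
  obtains i k where "i \<le> k" "inverse (real (Suc k)) \<le> (inner (from_nat_into D i) y)\<^sup>2"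
proof -
  obtain f where "f \<in> D" and f: "inner f y \<noteq> 0"
    using inner_dense_nonzero[OF assms(2,3)] by blast
  then obtain i where i: "f = from_nat_into D i"
    using from_nat_into_surj[OF assms(1)] by metis
  obtain n where n: "inverse (real (Suc n)) < (inner f y)\<^sup>2"
    using f reals_Archimedean[of "(inner f y)\<^sup>2"] by auto
  have "inverse (real (Suc (max i n))) \<le> inverse (real (Suc n))"
    by (intro le_imp_inverse_le) auto
  then have "inverse (real (Suc (max i n))) \<le> (inner (from_nat_into D i) y)\<^sup>2"
    using n unfolding i by (meson less_imp_le order_trans)
  then show thesis
    using that[of i "max i n"] by simp
qed

lemma continuous_bessel_family_level_set_finite:
  fixes \<phi> :: "'b \<Rightarrow> 'a::real_inner"
  assumes "continuous_bessel_family M \<phi>" and "c > 0"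
  shows "emeasure M {t \<in> space M. c \<le> (inner f (\<phi> t))\<^sup>2} < \<infinity>"
proof -
  obtain B where B: "(\<integral>\<^sup>+ t. ennreal ((inner f (\<phi> t))\<^sup>2) \<partial>M) \<le> ennreal (B * (norm f)\<^sup>2)"
    and meas: "(\<lambda>t. inner f (\<phi> t)) \<in> borel_measurable M"
    using assms(1) unfolding continuous_bessel_family_def by blast
  have "{t \<in> space M. c \<le> (inner f (\<phi> t))\<^sup>2}
      = {t \<in> space M. 1 \<le> ennreal (1 / c) * ennreal ((inner f (\<phi> t))\<^sup>2)}"
    using \<open>c > 0\<close> by (simp add: ennreal_mult''[symmetric] le_divide_eq_1_pos)
  also have "emeasure M \<dots> \<le> ennreal (1 / c) * (\<integral>\<^sup>+ t. ennreal ((inner f (\<phi> t))\<^sup>2) * indicator (space M) t \<partial>M)"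
    using meas by (intro nn_integral_Markov_inequality) auto
  also have "\<dots> = ennreal (1 / c) * (\<integral>\<^sup>+ t. ennreal ((inner f (\<phi> t))\<^sup>2) \<partial>M)"
    by (intro arg_cong2[where f="(*)"] nn_integral_cong) auto
  also have "\<dots> \<le> ennreal (1 / c) * ennreal (B * (norm f)\<^sup>2)"
    using B by (rule mult_left_mono) simp
  also have "\<dots> < \<infinity>"
    by (simp add: ennreal_mult_less_top)
  finally show ?thesis .
qed

text \<open>A set of the \<sigma>-algebra that meets the fibre \<open>{t. \<phi> t = 0}\<close> contains all of it, so the
  fibre is needed only when it has finite measure.\<close>
definition bessel_exhaustion :: "'b measure \<Rightarrow> ('b \<Rightarrow> 'a::real_inner) \<Rightarrow> 'a set \<Rightarrow> nat \<Rightarrow> 'b set" where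
  "bessel_exhaustion M \<phi> D k =
     (\<Union>i\<le>k. {t \<in> space M. inverse (real (Suc k)) \<le> (inner (from_nat_into D i) (\<phi> t))\<^sup>2})
     \<union> (if emeasure M {t \<in> space M. \<phi> t = 0} < \<infinity> then {t \<in> space M. \<phi> t = 0} else {})"

lemma incseq_bessel_exhaustion:
  fixes M :: "'b measure" and \<phi> :: "'b \<Rightarrow> 'a::real_inner"
  shows "incseq (bessel_exhaustion M \<phi> D)"
proof (rule incseq_SucI)
  fix k
  have "inverse (real (Suc (Suc k))) \<le> inverse (real (Suc k))"
    by (intro le_imp_inverse_le) auto
  then have "{t \<in> space M. inverse (real (Suc k)) \<le> g t} \<subseteq> {t \<in> space M. inverse (real (Suc (Suc k))) \<le> g t}"
    for g :: "'b \<Rightarrow> real"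
    using order_trans by blast
  then show "bessel_exhaustion M \<phi> D k \<subseteq> bessel_exhaustion M \<phi> D (Suc k)"
    unfolding bessel_exhaustion_def by (intro Un_mono UN_mono order_refl) auto
qed

lemma bessel_exhaustion_in_sigma_sets:
  "bessel_exhaustion M \<phi> D k \<in> sigma_sets (space M) {{t \<in> space M. \<phi> t \<in> U} | U. open U}"
proof -
  interpret A: sigma_algebra "space M" "sigma_sets (space M) {{t \<in> space M. \<phi> t \<in> U} | U. open U}"
    by (rule sigma_algebra_sigma_sets) auto
  have "closed {y. inverse (real (Suc k)) \<le> (inner (from_nat_into D i) y)\<^sup>2}" for i
    by (intro closed_Collect_le continuous_intros)
  from vimage_closed_in_sigma_sets_vimage_open[OF this, of "space M" \<phi>]
    vimage_closed_in_sigma_sets_vimage_open[of "{0}" "space M" \<phi>]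
  show ?thesis
    unfolding bessel_exhaustion_def by (intro A.Un A.finite_UN) auto
qed

lemma emeasure_bessel_exhaustion_finite:
  fixes \<phi> :: "'b \<Rightarrow> 'a::real_inner"
  assumes "continuous_bessel_family M \<phi>" "countable D" "closure D = UNIV"
  shows "emeasure M (bessel_exhaustion M \<phi> D k) < \<infinity>"
proof -
  have "{t \<in> space M. \<phi> t = 0} \<in> sets M"
    using vimage_closed_in_sigma_sets_vimage_open[of "{0}" "space M" \<phi>] assms
      weakly_measurable_sigma_sets_vimage_open[of D \<phi> M]
    unfolding continuous_bessel_family_def by auto
  moreover have "{t \<in> space M. inverse (real (Suc k)) \<le> (inner f (\<phi> t))\<^sup>2} \<in> fmeasurable M" for f
  proof -
    have "(\<lambda>t. inner f (\<phi> t)) \<in> borel_measurable M"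
      using assms(1) by (simp add: continuous_bessel_family_def)
    then have "{t \<in> space M. inverse (real (Suc k)) \<le> (inner f (\<phi> t))\<^sup>2} \<in> sets M"
      by measurable
    then show ?thesis
      using continuous_bessel_family_level_set_finite[OF assms(1), of "inverse (real (Suc k))" f]
      by (simp add: fmeasurable_def)
  qed
  ultimately have "bessel_exhaustion M \<phi> D k \<in> fmeasurable M"
    unfolding bessel_exhaustion_def by (intro fmeasurable.Un fmeasurable.finite_UN) (auto simp: fmeasurable_def)
  then show ?thesis
    by (simp add: fmeasurable_def)
qed

lemma subset_bessel_exhaustion:
  fixes \<phi> :: "'b \<Rightarrow> 'a::real_inner"
  assumes D: "countable D" "closure D = UNIV"
    and E: "E \<in> sigma_sets (space M) {{t \<in> space M. \<phi> t \<in> U} | U. open U}"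
      "E \<in> sets M" "emeasure M E < \<infinity>"
  shows "E \<subseteq> (\<Union>k. bessel_exhaustion M \<phi> D k)"
proof
  fix t assume "t \<in> E"
  then have "t \<in> space M"
    using E(2) sets.sets_into_space by blast
  show "t \<in> (\<Union>k. bessel_exhaustion M \<phi> D k)"
  proof (cases "\<phi> t = 0")
    case True
    have "{t \<in> space M. \<phi> t = 0} \<subseteq> E"
      using sigma_sets_vimage_open_fibre_subset[OF E(1) \<open>t \<in> E\<close>] True by auto
    then have "emeasure M {t \<in> space M. \<phi> t = 0} < \<infinity>"
      using emeasure_mono[OF _ E(2)] E(3) by (meson le_less_trans)
    then have "t \<in> bessel_exhaustion M \<phi> D 0"
      using True \<open>t \<in> space M\<close> by (auto simp: bessel_exhaustion_def)
    then show ?thesis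
      by blast
  next
    case False
    then obtain i k where "i \<le> k" "inverse (real (Suc k)) \<le> (inner (from_nat_into D i) (\<phi> t))\<^sup>2"
      using inner_enumeration_level[OF D] by blast
    then have "t \<in> bessel_exhaustion M \<phi> D k"
      using \<open>t \<in> space M\<close> unfolding bessel_exhaustion_def by blast
    then show ?thesis
      by blast
  qed
qed

theorem proposition2p3:
  fixes M :: "'b measure" and \<phi> :: "'b \<Rightarrow> 'a::{real_inner, complete_space}"
  assumes separable: "\<exists>D::'a set. countable D \<and> closure D = UNIV"
    and sigma_finite: "sigma_finite_measure M"
    and bessel: "continuous_bessel_family M \<phi>"
  shows "sigma_sets (space M) {{t \<in> space M. \<phi> t \<in> U} | U. open U} \<subseteq> sets M
         \<and> separable_measure_algebra M (sigma_sets (space M) {{t \<in> space M. \<phi> t \<in> U} | U. open U})"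
proof -
  let ?A = "sigma_sets (space M) {{t \<in> space M. \<phi> t \<in> U} | U. open U}"
  obtain D :: "'a set" where D: "countable D" "closure D = UNIV"
    using separable by blast
  have A_sets: "?A \<subseteq> sets M"
    using D bessel unfolding continuous_bessel_family_def
    by (intro weakly_measurable_sigma_sets_vimage_open) auto
  obtain Alg where Alg: "countable Alg" "algebra (space M) Alg"
    and Alg_generates: "sigma_sets (space M) Alg = ?A"
    using sigma_sets_vimage_open_generated_by_countable_algebra[OF D] by blast
  have "Alg \<subseteq> sets M"
    using A_sets Alg_generates by blast
  have "separable_measure_algebra M (sigma_sets (space M) Alg)"
  proof (rule separable_measure_algebra_sigma_sets[OF Alg \<open>Alg \<subseteq> sets M\<close>])
    show "incseq (bessel_exhaustion M \<phi> D)"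
      by (rule incseq_bessel_exhaustion)
    show "range (bessel_exhaustion M \<phi> D) \<subseteq> sigma_sets (space M) Alg"
      unfolding Alg_generates using bessel_exhaustion_in_sigma_sets by blast
    show "emeasure M (bessel_exhaustion M \<phi> D k) < \<infinity>" for k
      using bessel D by (rule emeasure_bessel_exhaustion_finite)
    show "E \<subseteq> (\<Union>k. bessel_exhaustion M \<phi> D k)"
      if "E \<in> sigma_sets (space M) Alg" "emeasure M E < \<infinity>" for E
      using that A_sets unfolding Alg_generates by (intro subset_bessel_exhaustion[OF D]) auto
  qed
  with A_sets show ?thesis
    unfolding Alg_generates by blast
qed

end
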